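(* Let $H$ be a graph, let $G$ be a connected graph, and let $((H^{\Phi},\Phi);(T,\mathcal{X}))$ be an $H$-profile of $G$. Then there exists $t \in V(T)$ such that the set $\bigcup_{x \in \mathcal{X}(t)} V_x$ is a longest path transversal of $G$.
   Context: All graphs are finite and simple. A subdivision $H'$ of $H$ is obtained by replacing each edge $xy$ of $H$ by a path from $x$ to $y$ of length at least one, with the interiors of these paths pairwise disjoint and anticomplete. An $H$-representation of $G$ is a pair $(H^{\Phi},\Phi)$ where $H^{\Phi}$ is a subdivision of $H$ and $\Phi: V(G)\to 2^{V(H^{\Phi})}$ is such that each $H^{\Phi}[\Phi(v)]$ is connected and, for distinct $u,v\in V(G)$, $uv\in E(G)$ iff $\Phi(u)\cap\Phi(v)\neq\emptyset$. It is nice if every vertex of $H^{\Phi}$ lies in some $\Phi(v)$ and for every edge $xy$ of $H^{\Phi}$ some $\Phi(v)$ contains both $x$ and $y$. A tree decomposition of a graph $F$ is a pair $(T,\mathcal{X})$ with $T$ a tree and $\mathcal{X}:V(T)\to 2^{V(F)}$ such that every vertex of $F$ lies in some bag, every edge of $F$ has both ends in some bag, and for each vertex $v$ of $F$ the set $\{t: v\in\mathcal{X}(t)\}$ induces a nonempty connected subtree of $T$. An $H$-profile of $G$ is a tuple $((H^{\Phi},\Phi);(T,\mathcal{X}))$ where $(H^{\Phi},\Phi)$ is a nice $H$-representation of $G$ and $(T,\mathcal{X})$ is a tree decomposition of $H^{\Phi}$. For $x\in V(H^{\Phi})$, $V_x=\{v\in V(G): x\in\Phi(v)\}$. A longest path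 of $G$ is a path of maximum length in $G$; a longest path transversal is a set of vertices of $G$ meeting every longest path. *)

theory Defs
  imports Main
begin

definition graph :: "'a set \<Rightarrow> 'a set set \<Rightarrow> bool" where
  "graph V E \<longleftrightarrow> finite V \<and> (\<forall>e\<in>E. \<exists>x y. x \<noteq> y \<and> e = {x, y} \<and> x \<in> V \<and> y \<in> V)"

definition list_edges :: "'a list \<Rightarrow> 'a set set" where
  "list_edges p = {{p ! i, p ! Suc i} | i. Suc i < length p}"

text \<open>A path is a nonempty list of distinct vertices, consecutive ones adjacent;
its length is the number of edges, i.e. length p - 1.\<close>
definition is_path :: "'a set \<Rightarrow> 'a set set \<Rightarrow> 'a list \<Rightarrow> bool" where
  "is_path V E p \<longleftrightarrow> p \<noteq> [] \<and> distinct p \<and> set p \<subseteq> V \<and> list_edges p \<subseteq> E"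

definition connected_set :: "'a set \<Rightarrow> 'a set set \<Rightarrow> 'a set \<Rightarrow> bool" where
  "connected_set V E S \<longleftrightarrow> S \<noteq> {} \<and> S \<subseteq> V \<and>
     (\<forall>x\<in>S. \<forall>y\<in>S. \<exists>p. is_path S {e\<in>E. e \<subseteq> S} p \<and> hd p = x \<and> last p = y)"

definition connected_graph :: "'a set \<Rightarrow> 'a set set \<Rightarrow> bool" where
  "connected_graph V E \<longleftrightarrow> graph V E \<and> connected_set V E V"

definition has_cycle :: "'a set \<Rightarrow> 'a set set \<Rightarrow> bool" where
  "has_cycle V E \<longleftrightarrow> (\<exists>c. length c \<ge> 3 \<and> is_path V E c \<and> {last c, hd c} \<in> E)"

definition tree :: "'a set \<Rightarrow> 'a set set \<Rightarrow> bool" where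
  "tree V E \<longleftrightarrow> connected_graph V E \<and> \<not> has_cycle V E"

text \<open>F = (VF, EF) is a subdivision of H = (VH, EH): the vertices of H are embedded
by an injective map emb, each edge e of H is replaced by a path P e between the images
of its ends, of length at least one, the interiors are pairwise disjoint and disjoint
from the branch vertices, and F consists exactly of the branch vertices, the interior
vertices and the path edges (so the interiors are also pairwise anticomplete).\<close>
definition interior :: "'a list \<Rightarrow> 'a set" where
  "interior p = set (butlast (tl p))"

definition subdivision :: "'h set \<Rightarrow> 'h set set \<Rightarrow> 'f set \<Rightarrow> 'f set set \<Rightarrow> bool" where
  "subdivision VH EH VF EF \<longleftrightarrow>
     (\<exists>emb :: 'h \<Rightarrow> 'f. \<exists>P :: 'h set \<Rightarrow> 'f list.
        inj_on emb VH \<and>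
        (\<forall>e\<in>EH. length (P e) \<ge> 2 \<and> distinct (P e) \<and> {hd (P e), last (P e)} = emb ` e
                 \<and> interior (P e) \<inter> emb ` VH = {}) \<and>
        (\<forall>e\<in>EH. \<forall>e'\<in>EH. e \<noteq> e' \<longrightarrow> interior (P e) \<inter> interior (P e') = {}) \<and>
        VF = emb ` VH \<union> (\<Union>e\<in>EH. interior (P e)) \<and>
        EF = (\<Union>e\<in>EH. list_edges (P e)))"

definition representation ::
  "'h set \<Rightarrow> 'h set set \<Rightarrow> 'v set \<Rightarrow> 'v set set \<Rightarrow> 'f set \<Rightarrow> 'f set set \<Rightarrow> ('v \<Rightarrow> 'f set) \<Rightarrow> bool" where
  "representation VH EH VG EG VF EF Phi \<longleftrightarrow>
     subdivision VH EH VF EF \<and>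
     (\<forall>v\<in>VG. Phi v \<subseteq> VF \<and> connected_set VF EF (Phi v)) \<and>
     (\<forall>u\<in>VG. \<forall>v\<in>VG. u \<noteq> v \<longrightarrow> ({u, v} \<in> EG \<longleftrightarrow> Phi u \<inter> Phi v \<noteq> {}))"

definition nice_representation ::
  "'h set \<Rightarrow> 'h set set \<Rightarrow> 'v set \<Rightarrow> 'v set set \<Rightarrow> 'f set \<Rightarrow> 'f set set \<Rightarrow> ('v \<Rightarrow> 'f set) \<Rightarrow> bool" where
  "nice_representation VH EH VG EG VF EF Phi \<longleftrightarrow>
     representation VH EH VG EG VF EF Phi \<and>
     (\<forall>x\<in>VF. \<exists>v\<in>VG. x \<in> Phi v) \<and>
     (\<forall>e\<in>EF. \<exists>v\<in>VG. e \<subseteq> Phi v)"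

definition tree_decomposition ::
  "'f set \<Rightarrow> 'f set set \<Rightarrow> 't set \<Rightarrow> 't set set \<Rightarrow> ('t \<Rightarrow> 'f set) \<Rightarrow> bool" where
  "tree_decomposition VF EF VT ET X \<longleftrightarrow>
     tree VT ET \<and>
     (\<forall>t\<in>VT. X t \<subseteq> VF) \<and>
     (\<forall>x\<in>VF. \<exists>t\<in>VT. x \<in> X t) \<and>
     (\<forall>e\<in>EF. \<exists>t\<in>VT. e \<subseteq> X t) \<and>
     (\<forall>x\<in>VF. connected_set VT ET {t\<in>VT. x \<in> X t})"

definition profile ::
  "'h set \<Rightarrow> 'h set set \<Rightarrow> 'v set \<Rightarrow> 'v set set \<Rightarrow> 'f set \<Rightarrow> 'f set set \<Rightarrow> ('v \<Rightarrow> 'f set)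
   \<Rightarrow> 't set \<Rightarrow> 't set set \<Rightarrow> ('t \<Rightarrow> 'f set) \<Rightarrow> bool" where
  "profile VH EH VG EG VF EF Phi VT ET X \<longleftrightarrow>
     nice_representation VH EH VG EG VF EF Phi \<and> tree_decomposition VF EF VT ET X"

definition Vx :: "'v set \<Rightarrow> ('v \<Rightarrow> 'f set) \<Rightarrow> 'f \<Rightarrow> 'v set" where
  "Vx VG Phi x = {v\<in>VG. x \<in> Phi v}"

definition longest_path :: "'a set \<Rightarrow> 'a set set \<Rightarrow> 'a list \<Rightarrow> bool" where
  "longest_path V E p \<longleftrightarrow> is_path V E p \<and> (\<forall>q. is_path V E q \<longrightarrow> length q \<le> length p)"

definition lp_transversal :: "'a set \<Rightarrow> 'a set set \<Rightarrow> 'a set \<Rightarrow> bool" where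
  "lp_transversal V E S \<longleftrightarrow> S \<subseteq> V \<and> (\<forall>p. longest_path V E p \<longrightarrow> set p \<inter> S \<noteq> {})"

end

theory Submission
  imports Defs
begin

text \<open>Longest paths of a connected graph pairwise intersect: if two were disjoint, a shortest
  path between them together with the longer half of each would be longer still. For a path P
  of G the union of the sets Phi v, v on P, is connected in the subdivision (consecutive
  vertices have intersecting connected Phi-sets), so the nodes of T whose bags meet it form a
  subtree. These subtrees pairwise intersect, hence by the Helly property of subtrees of a tree
  they share a node t, and the bag of t meets Phi v for some v on every longest path.\<close>

lemma list_edges_singleton [simp]: "list_edges [a] = {}"
  by (simp add: list_edges_def)

lemma list_edges_Cons_Cons [simp]: "list_edges (a # b # xs) = insert {a, b} (list_edges (b # xs))"
  unfolding list_edges_def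
proof (intro set_eqI iffI)
  fix e assume "e \<in> {{(a # b # xs) ! i, (a # b # xs) ! Suc i} | i. Suc i < length (a # b # xs)}"
  then obtain i where "e = {(a # b # xs) ! i, (a # b # xs) ! Suc i}" "Suc i < length (a # b # xs)"
    by blast
  then show "e \<in> insert {a, b} {{(b # xs) ! i, (b # xs) ! Suc i} | i. Suc i < length (b # xs)}"
    by (cases i) auto
next
  fix e assume "e \<in> insert {a, b} {{(b # xs) ! i, (b # xs) ! Suc i} | i. Suc i < length (b # xs)}"
  then show "e \<in> {{(a # b # xs) ! i, (a # b # xs) ! Suc i} | i. Suc i < length (a # b # xs)}"
    by (auto intro: exI[of _ 0] exI[of _ "Suc _"])
qed

lemma list_edges_append:
  "xs \<noteq> [] \<Longrightarrow> ys \<noteq> [] \<Longrightarrow>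
   list_edges (xs @ ys) = list_edges xs \<union> list_edges ys \<union> {{last xs, hd ys}}"
proof (induction xs rule: induct_list012)
  case (2 a)
  then show ?case by (cases ys) auto
qed auto

lemma list_edges_rev [simp]: "list_edges (rev xs) = list_edges xs"
proof (induction xs rule: induct_list012)
  case (3 a b xs)
  have "list_edges (rev (a # b # xs)) = list_edges (rev (b # xs) @ [a])" by simp
  also have "\<dots> = list_edges (b # xs) \<union> {{b, a}}"
    using "3.IH"(2) by (subst list_edges_append) auto
  finally show ?case by (auto simp: insert_commute)
qed auto

lemma list_edges_subset_set: "e \<in> list_edges p \<Longrightarrow> e \<subseteq> set p"
  unfolding list_edges_def by auto

lemma is_path_nonempty: "is_path V E p \<Longrightarrow> p \<noteq> []"
  unfolding is_path_def by auto

lemma is_path_singleton [simp]: "is_path V E [x] \<longleftrightarrow> x \<in> V"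
  unfolding is_path_def by auto

lemma is_path_rev [simp]: "is_path V E (rev p) \<longleftrightarrow> is_path V E p"
  unfolding is_path_def by auto

lemma is_path_append_iff:
  "xs \<noteq> [] \<Longrightarrow> ys \<noteq> [] \<Longrightarrow> is_path V E (xs @ ys) \<longleftrightarrow>
    is_path V E xs \<and> is_path V E ys \<and> set xs \<inter> set ys = {} \<and> {last xs, hd ys} \<in> E"
  unfolding is_path_def by (auto simp: list_edges_append)

lemma is_path_Cons_Cons_iff:
  "is_path V E (a # b # xs) \<longleftrightarrow> is_path V E (b # xs) \<and> a \<in> V \<and> a \<notin> set (b # xs) \<and> {a, b} \<in> E"
  using is_path_append_iff[of "[a]" "b # xs"] by auto

lemma is_path_prefix: "is_path V E (xs @ ys) \<Longrightarrow> xs \<noteq> [] \<Longrightarrow> is_path V E xs"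
  by (cases "ys = []") (auto simp: is_path_append_iff)

lemma is_path_suffix: "is_path V E (xs @ ys) \<Longrightarrow> ys \<noteq> [] \<Longrightarrow> is_path V E ys"
  by (cases "xs = []") (auto simp: is_path_append_iff)

lemma is_path_subgraph:
  "is_path V E p \<Longrightarrow> set p \<subseteq> V' \<Longrightarrow> (\<And>e. e \<in> E \<Longrightarrow> e \<subseteq> set p \<Longrightarrow> e \<in> E') \<Longrightarrow> is_path V' E' p"
  unfolding is_path_def using list_edges_subset_set by blast

lemma is_path_join:
  assumes "is_path V E xs" "is_path V E ys" "last xs = hd ys" "set xs \<inter> set ys \<subseteq> {hd ys}"
  shows "is_path V E (xs @ tl ys)" "length (xs @ tl ys) = length xs + length ys - 1"
proof -
  obtain h ys' where ys: "ys = h # ys'"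
    using is_path_nonempty[OF assms(2)] by (cases ys) auto
  show "length (xs @ tl ys) = length xs + length ys - 1"
    using ys by simp
  show "is_path V E (xs @ tl ys)"
  proof (cases ys')
    case (Cons b bs)
    then show ?thesis
      using assms ys is_path_nonempty[OF assms(1)] by (auto simp: is_path_append_iff is_path_Cons_Cons_iff)
  qed (use assms ys in simp)
qed

lemma length_path_le_card: "finite V \<Longrightarrow> is_path V E p \<Longrightarrow> length p \<le> card V"
  unfolding is_path_def by (metis card_mono distinct_card)

definition adj_within :: "'a set set \<Rightarrow> 'a set \<Rightarrow> ('a \<times> 'a) set" where
  "adj_within E S = {(a, b). a \<in> S \<and> b \<in> S \<and> {a, b} \<in> E}"

lemma rtrancl_adj_within_mono: "S \<subseteq> S' \<Longrightarrow> (adj_within E S)\<^sup>* \<subseteq> (adj_within E S')\<^sup>*"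
  by (rule rtrancl_mono) (auto simp: adj_within_def)

lemma rtrancl_adj_within_sym: "(a, b) \<in> (adj_within E S)\<^sup>* \<Longrightarrow> (b, a) \<in> (adj_within E S)\<^sup>*"
proof -
  have "(adj_within E S)\<inverse> = adj_within E S"
    by (auto simp: adj_within_def insert_commute)
  then show "(a, b) \<in> (adj_within E S)\<^sup>* \<Longrightarrow> (b, a) \<in> (adj_within E S)\<^sup>*"
    by (metis rtrancl_converseI)
qed

lemma rtrancl_adj_within_if_path:
  assumes "list_edges p \<subseteq> E" "set p \<subseteq> S" "a \<in> set p" "b \<in> set p"
  shows "(a, b) \<in> (adj_within E S)\<^sup>*"
proof -
  have "(hd p, c) \<in> (adj_within E S)\<^sup>*" if "c \<in> set p" for c
    using assms(1,2) that
  proof (induction p rule: induct_list012)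
    case (3 x y zs)
    have "(x, y) \<in> adj_within E S"
      using "3.prems"(1,2) by (auto simp: adj_within_def)
    moreover have "(y, c) \<in> (adj_within E S)\<^sup>*" if "c \<in> set (y # zs)"
      using "3.IH"(2) "3.prems" that by simp
    ultimately show ?case
      using "3.prems"(3) by (auto intro: converse_rtrancl_into_rtrancl)
  qed auto
  then show ?thesis
    using assms(3,4) rtrancl_adj_within_sym by (metis rtrancl_trans)
qed

lemma path_if_rtrancl_adj_within:
  assumes "(x, y) \<in> (adj_within E S)\<^sup>*" "x \<in> S"
  shows "\<exists>p. is_path S {e\<in>E. e \<subseteq> S} p \<and> hd p = x \<and> last p = y"
  using assms
proof (induction rule: rtrancl_induct)
  case base
  then show ?case by (intro exI[of _ "[x]"]) simp
next
  case (step y z)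
  then obtain p where p: "is_path S {e\<in>E. e \<subseteq> S} p" "hd p = x" "last p = y"
    by blast
  have z: "z \<in> S" "y \<in> S" "{y, z} \<in> E"
    using step.hyps(2) by (auto simp: adj_within_def)
  show ?case
  proof (cases "z \<in> set p")
    case True
    then obtain us vs where p_split: "p = (us @ [z]) @ vs"
      by (metis append.assoc append_Cons append_Nil split_list)
    then have "is_path S {e\<in>E. e \<subseteq> S} (us @ [z])"
      using p(1) is_path_prefix by blast
    moreover have "hd (us @ [z]) = x"
      using p(2) p_split by (cases us) auto
    ultimately show ?thesis by fastforce
  next
    case False
    have "is_path S {e\<in>E. e \<subseteq> S} (p @ [z])"
      using p z False is_path_nonempty[OF p(1)] by (simp add: is_path_append_iff)
    moreover have "hd (p @ [z]) = x"
      using p(2) is_path_nonempty[OF p(1)] by simp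
    ultimately show ?thesis by fastforce
  qed
qed

lemma connected_set_iff_rtrancl:
  "connected_set V E S \<longleftrightarrow> S \<noteq> {} \<and> S \<subseteq> V \<and> (\<forall>x\<in>S. \<forall>y\<in>S. (x, y) \<in> (adj_within E S)\<^sup>*)"
proof -
  have "(x, y) \<in> (adj_within E S)\<^sup>*"
    if "is_path S {e\<in>E. e \<subseteq> S} p" "hd p = x" "last p = y" for p x y
  proof (rule rtrancl_adj_within_if_path)
    show "list_edges p \<subseteq> E" "set p \<subseteq> S"
      using that(1) unfolding is_path_def by auto
    show "x \<in> set p" "y \<in> set p"
      using that is_path_nonempty[OF that(1)] by auto
  qed
  moreover have "\<exists>p. is_path S {e\<in>E. e \<subseteq> S} p \<and> hd p = x \<and> last p = y"
    if "(x, y) \<in> (adj_within E S)\<^sup>*" "x \<in> S" for x y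
    using path_if_rtrancl_adj_within[OF that] .
  ultimately have "(\<forall>x\<in>S. \<forall>y\<in>S. \<exists>p. is_path S {e\<in>E. e \<subseteq> S} p \<and> hd p = x \<and> last p = y)
      \<longleftrightarrow> (\<forall>x\<in>S. \<forall>y\<in>S. (x, y) \<in> (adj_within E S)\<^sup>*)"
    by blast
  then show ?thesis
    unfolding connected_set_def by (simp only:)
qed

lemma connected_set_nonempty: "connected_set V E S \<Longrightarrow> S \<noteq> {}"
  unfolding connected_set_def by simp

lemma connected_set_subset: "connected_set V E S \<Longrightarrow> S \<subseteq> V"
  unfolding connected_set_def by simp

lemma is_path_connected_set: "is_path V E p \<Longrightarrow> connected_set V E (set p)"
  unfolding connected_set_iff_rtrancl is_path_def
  by (auto intro: rtrancl_adj_within_if_path)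

lemma connected_set_UN:
  assumes I: "connected_set V\<^sub>1 E\<^sub>1 I"
    and f: "\<And>i. i \<in> I \<Longrightarrow> connected_set V\<^sub>2 E\<^sub>2 (f i)"
    and meet: "\<And>i j. i \<in> I \<Longrightarrow> j \<in> I \<Longrightarrow> {i, j} \<in> E\<^sub>1 \<Longrightarrow> f i \<inter> f j \<noteq> {}"
  shows "connected_set V\<^sub>2 E\<^sub>2 (\<Union>i\<in>I. f i)"
proof -
  let ?U = "\<Union>i\<in>I. f i"
  let ?R = "(adj_within E\<^sub>2 ?U)\<^sup>*"
  have within_f: "(a, b) \<in> ?R" if "i \<in> I" "a \<in> f i" "b \<in> f i" for i a b
  proof -
    have "(a, b) \<in> (adj_within E\<^sub>2 (f i))\<^sup>*"
      using f[OF that(1)] that(2,3) unfolding connected_set_iff_rtrancl by blast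
    moreover have "f i \<subseteq> ?U"
      using that(1) by blast
    ultimately show ?thesis
      using rtrancl_adj_within_mono by blast
  qed
  have along_I: "(a, b) \<in> ?R"
    if "(u, v) \<in> (adj_within E\<^sub>1 I)\<^sup>*" "u \<in> I" "a \<in> f u" "b \<in> f v" for u v a b
    using that(1,4)
  proof (induction arbitrary: b rule: rtrancl_induct)
    case base
    then show ?case
      using within_f that(2,3) by blast
  next
    case (step y z)
    then have yz: "y \<in> I" "z \<in> I" "{y, z} \<in> E\<^sub>1"
      by (auto simp: adj_within_def)
    then obtain c where c: "c \<in> f y" "c \<in> f z"
      using meet by blast
    have "(a, c) \<in> ?R"
      using step.IH[OF c(1)] .
    moreover have "(c, b) \<in> ?R"
      using within_f[OF yz(2) c(2) step.prems] .
    ultimately show ?case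
      by (rule rtrancl_trans)
  qed
  show ?thesis
    unfolding connected_set_iff_rtrancl
  proof (intro conjI ballI)
    obtain i where "i \<in> I"
      using connected_set_nonempty[OF I] by blast
    then show "?U \<noteq> {}"
      using connected_set_nonempty[OF f] by blast
    show "?U \<subseteq> V\<^sub>2"
      using connected_set_subset[OF f] by blast
  next
    fix a b assume "a \<in> ?U" "b \<in> ?U"
    then obtain u v where "u \<in> I" "v \<in> I" "a \<in> f u" "b \<in> f v"
      by blast
    moreover have "(u, v) \<in> (adj_within E\<^sub>1 I)\<^sup>*"
      using I \<open>u \<in> I\<close> \<open>v \<in> I\<close> unfolding connected_set_iff_rtrancl by blast
    ultimately show "(a, b) \<in> ?R"
      using along_I by blast
  qed
qed

section \<open>Longest paths\<close>

lemma path_half_ending_at: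
  assumes "is_path V E P" "p \<in> set P"
  obtains A where "is_path V E A" "last A = p" "set A \<subseteq> set P" "length P + 1 \<le> 2 * length A"
proof -
  obtain P\<^sub>1 P\<^sub>2 where P: "P = P\<^sub>1 @ p # P\<^sub>2"
    using assms(2) by (meson split_list)
  have "is_path V E (P\<^sub>1 @ [p])"
    using assms(1) P is_path_prefix[of V E "P\<^sub>1 @ [p]" P\<^sub>2] by simp
  moreover have "is_path V E (rev (p # P\<^sub>2))"
    using assms(1) P is_path_suffix[of V E P\<^sub>1 "p # P\<^sub>2"] by (simp only: is_path_rev) simp
  ultimately show ?thesis
    using that P by (cases "length P\<^sub>2 \<le> length P\<^sub>1") fastforce+
qed

lemma path_half_starting_at:
  assumes "is_path V E P" "p \<in> set P"
  obtains B where "is_path V E B" "hd B = p" "set B \<subseteq> set P" "length P + 1 \<le> 2 * length B"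
proof -
  obtain A where A: "is_path V E A" "last A = p" "set A \<subseteq> set P" "length P + 1 \<le> 2 * length A"
    using path_half_ending_at[of V E "rev P" p] assms by auto
  then have "is_path V E (rev A)" "hd (rev A) = p"
    using is_path_nonempty[OF A(1)] by (auto simp: hd_rev)
  moreover have "set (rev A) \<subseteq> set P" "length P + 1 \<le> 2 * length (rev A)"
    using A(3,4) by simp_all
  ultimately show ?thesis
    by (rule that)
qed

text \<open>Take a shortest path from A to B.\<close>
lemma connected_graph_linking_path:
  assumes "connected_graph V E" "a \<in> A" "b \<in> B" "A \<subseteq> V" "B \<subseteq> V"
  obtains R where "is_path V E R" "hd R \<in> A" "last R \<in> B"
    "set (tl R) \<inter> A = {}" "set (butlast R) \<inter> B = {}"
proof -
  define C where "C = {r. is_path V E r \<and> hd r \<in> A \<and> last r \<in> B}"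
  obtain r\<^sub>0 where "is_path V {e\<in>E. e \<subseteq> V} r\<^sub>0" "hd r\<^sub>0 = a" "last r\<^sub>0 = b"
    using assms unfolding connected_graph_def connected_set_def by blast
  then have "r\<^sub>0 \<in> C"
    using assms(2,3) unfolding C_def is_path_def by auto
  then obtain R where RC: "R \<in> C" and R_min: "\<And>r. r \<in> C \<Longrightarrow> length R \<le> length r"
    using ex_has_least_nat[of "\<lambda>r. r \<in> C" r\<^sub>0 length] by blast
  have R: "is_path V E R" "hd R \<in> A" "last R \<in> B"
    using RC unfolding C_def by auto
  have "set (tl R) \<inter> A = {}"
  proof (rule ccontr)
    assume "set (tl R) \<inter> A \<noteq> {}"
    then obtain z us vs where z: "z \<in> A" "tl R = us @ z # vs"
      by (meson disjoint_iff split_list)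
    then have R_split: "R = (hd R # us) @ (z # vs)"
      using is_path_nonempty[OF R(1)] by (cases R) auto
    have "is_path V E ((hd R # us) @ (z # vs))"
      using R(1) by (subst (asm) R_split)
    then have "is_path V E (z # vs)"
      using is_path_suffix by blast
    moreover have "last (z # vs) = last R"
      using arg_cong[OF R_split, of last] by simp
    ultimately have "z # vs \<in> C"
      using R z unfolding C_def by auto
    then show False
      using R_min arg_cong[OF R_split, of length] by fastforce
  qed
  moreover have "set (butlast R) \<inter> B = {}"
  proof (rule ccontr)
    assume "set (butlast R) \<inter> B \<noteq> {}"
    then obtain z us vs where z: "z \<in> B" "butlast R = us @ z # vs"
      by (meson disjoint_iff split_list)
    then have R_split: "R = (us @ [z]) @ (vs @ [last R])"
      using is_path_nonempty[OF R(1)]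
      by (metis append.assoc append_Cons append_butlast_last_id append_self_conv2)
    have "is_path V E ((us @ [z]) @ (vs @ [last R]))"
      using R(1) by (subst (asm) R_split)
    then have "is_path V E (us @ [z])"
      using is_path_prefix by blast
    moreover have "hd (us @ [z]) = hd R"
      using arg_cong[OF R_split, of hd] by (cases us) simp_all
    ultimately have "us @ [z] \<in> C"
      using R z unfolding C_def by auto
    then show False
      using R_min arg_cong[OF R_split, of length] by fastforce
  qed
  ultimately show ?thesis
    using that R by blast
qed

text \<open>The longer half of P, a shortest P-Q path R and the longer half of Q join to a path with
  at least (|P| + 1)/2 + (|Q| + 1)/2 + |R| - 2 > |P| vertices.\<close>
lemma longest_paths_intersect:
  assumes G: "connected_graph V E" and LP: "longest_path V E P" and LQ: "longest_path V E Q"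
  shows "set P \<inter> set Q \<noteq> {}"
proof
  assume disj: "set P \<inter> set Q = {}"
  have P: "is_path V E P" and Q: "is_path V E Q"
    using LP LQ unfolding longest_path_def by auto
  have len_PQ: "length P = length Q"
    using LP LQ unfolding longest_path_def by (meson le_antisym)
  obtain R where R: "is_path V E R" "hd R \<in> set P" "last R \<in> set Q"
    and R_P: "set (tl R) \<inter> set P = {}" and R_Q: "set (butlast R) \<inter> set Q = {}"
    using connected_graph_linking_path[OF G, of "hd P" "set P" "last Q" "set Q"]
      is_path_nonempty[OF P] is_path_nonempty[OF Q] P Q unfolding is_path_def by auto
  have R_ne: "R \<noteq> []" "tl R \<noteq> []"
    using R disj is_path_nonempty[OF R(1)] by (cases R; auto)+
  have set_R: "set R = insert (hd R) (set (tl R))" "set R = insert (last R) (set (butlast R))"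
    using R_ne by (metis list.collapse list.simps(15), metis append_butlast_last_id
        rotate1.simps(2) list.simps(15) set_rotate1)
  obtain A where A: "is_path V E A" "last A = hd R" "set A \<subseteq> set P" "length P + 1 \<le> 2 * length A"
    using path_half_ending_at[OF P R(2)] .
  obtain B where B: "is_path V E B" "hd B = last R" "set B \<subseteq> set Q" "length Q + 1 \<le> 2 * length B"
    using path_half_starting_at[OF Q R(3)] .
  have AR: "is_path V E (A @ tl R)" "length (A @ tl R) = length A + length R - 1"
    using is_path_join[OF A(1) R(1) A(2)] A(3) R_P set_R by auto
  have "last (A @ tl R) = last R"
    using R_ne by (simp add: last_tl)
  moreover have "set (A @ tl R) \<inter> set B \<subseteq> {hd B}"
    using A(3) B(2,3) disj R_Q set_R by auto
  ultimately have "is_path V E ((A @ tl R) @ tl B)"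
    "length ((A @ tl R) @ tl B) = length A + length R - 1 + length B - 1"
    using is_path_join[OF AR(1) B(1)] AR(2) B(2) by auto
  moreover have "length ((A @ tl R) @ tl B) \<le> length P"
    using LP calculation(1) unfolding longest_path_def by blast
  moreover have "length R \<ge> 2"
    using R_ne by (cases R) (auto simp: Suc_le_eq)
  ultimately show False
    using A(4) B(4) len_PQ by linarith
qed

section \<open>Helly property of subtrees\<close>

lemma graph_edgeD: "graph V E \<Longrightarrow> {a, b} \<in> E \<Longrightarrow> a \<noteq> b \<and> a \<in> V \<and> b \<in> V"
  unfolding graph_def by (auto simp: doubleton_eq_iff)

lemma longest_path_exists:
  assumes "finite V" "is_path V E r"
  obtains q where "longest_path V E q" "length r \<le> length q"
proof -
  let ?len = "\<lambda>n. \<exists>q. is_path V E q \<and> length q = n"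
  have "?len (length r)"
    using assms(2) by blast
  moreover have "\<forall>n. ?len n \<longrightarrow> n < Suc (card V)"
    using length_path_le_card[OF assms(1)] by (auto simp: less_Suc_eq_le)
  ultimately obtain n where "?len n" and n_max: "\<forall>m. ?len m \<longrightarrow> m \<le> n"
    using ex_has_greatest_nat[of ?len "length r" "\<lambda>n. n"] by blast
  then obtain q where q: "is_path V E q" "length q = n"
    by blast
  have "longest_path V E q"
    unfolding longest_path_def using q n_max by auto
  moreover have "length r \<le> length q"
    using q n_max assms(2) by auto
  ultimately show ?thesis
    by (rule that)
qed

text \<open>A neighbour of the first vertex outside the path would extend it; one on the path
  would close a cycle.\<close>
lemma longest_path_hd_unique_neighbour:
  assumes "graph V E" "\<not> has_cycle V E" "longest_path V E (l # p # rest)" "{l, y} \<in> E"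
  shows "y = p"
proof (rule ccontr)
  assume "y \<noteq> p"
  have q: "is_path V E (l # p # rest)"
    using assms(3) unfolding longest_path_def by blast
  have y: "y \<noteq> l" "y \<in> V"
    using graph_edgeD[OF assms(1,4)] by auto
  show False
  proof (cases "y \<in> set rest")
    case False
    then have "is_path V E (y # l # p # rest)"
      using q y \<open>y \<noteq> p\<close> assms(4) by (auto simp: is_path_Cons_Cons_iff insert_commute)
    then show False
      using assms(3) unfolding longest_path_def by fastforce
  next
    case True
    then obtain us vs where "rest = us @ y # vs"
      by (meson split_list)
    then have "is_path V E ((l # p # us @ [y]) @ vs)"
      using q by simp
    then have "is_path V E (l # p # us @ [y])"
      using is_path_prefix by blast
    then show False
      using assms(2,4) unfolding has_cycle_def by (fastforce simp: insert_commute)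
  qed
qed

lemma tree_has_leaf:
  assumes "tree V E" "2 \<le> card V"
  shows "\<exists>l\<in>V. \<exists>p\<in>V. l \<noteq> p \<and> {l, p} \<in> E \<and> (\<forall>y. {l, y} \<in> E \<longrightarrow> y = p)"
proof -
  have G: "graph V E" "connected_set V E V" "\<not> has_cycle V E"
    using assms(1) unfolding tree_def connected_graph_def by auto
  have fin: "finite V"
    using G(1) unfolding graph_def by blast
  obtain a b where ab: "a \<in> V" "b \<in> V" "a \<noteq> b"
    using assms(2) by (metis card_2_iff' card_le_Suc_iff numeral_2_eq_2 obtain_subset_with_card_n subset_iff)
  obtain r where r: "is_path V {e\<in>E. e \<subseteq> V} r" "hd r = a" "last r = b"
    using G(2) ab unfolding connected_set_def by blast
  then have r': "is_path V E r"
    unfolding is_path_def by auto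
  obtain q where q: "longest_path V E q" "length r \<le> length q"
    using longest_path_exists[OF fin r'] .
  have "2 \<le> length r"
    using r ab is_path_nonempty[OF r(1)] by (cases r; cases "tl r") auto
  then obtain l p rest where lpr: "q = l # p # rest"
    using q(2) by (cases q; cases "tl q") auto
  then have "is_path V E (l # p # rest)"
    using q(1) unfolding longest_path_def by blast
  then have "l \<in> V" "p \<in> V" "l \<noteq> p" "{l, p} \<in> E"
    by (auto simp: is_path_Cons_Cons_iff dest: graph_edgeD[OF G(1)])
  then show ?thesis
    using longest_path_hd_unique_neighbour[OF G(1,3)] q(1) lpr by blast
qed

lemma path_avoids_leaf:
  assumes "is_path V E q" "hd q \<noteq> l" "last q \<noteq> l" "\<And>y. {l, y} \<in> E \<Longrightarrow> y = p"
  shows "l \<notin> set q"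
proof
  assume "l \<in> set q"
  then obtain us vs where q: "q = us @ l # vs"
    by (meson split_list)
  have ne: "us \<noteq> []" "vs \<noteq> []"
    using q assms(2,3) by auto
  then have disj: "set us \<inter> set (l # vs) = {}" and "{l, last us} \<in> E" "is_path V E ([l] @ vs)"
    using assms(1) q is_path_append_iff[of us "l # vs" V E] by (auto simp: insert_commute)
  then have "{l, hd vs} \<in> E"
    using ne is_path_append_iff[of "[l]" vs V E] by auto
  then have "last us = hd vs"
    using assms(4) \<open>{l, last us} \<in> E\<close> by metis
  then show False
    using disj last_in_set[OF ne(1)] hd_in_set[OF ne(2)] by (metis disjoint_iff list.set_intros(2))
qed

lemma connected_set_contains_leaf_neighbour:
  assumes "connected_set V E S" "l \<in> S" "S \<noteq> {l}" "\<And>y. {l, y} \<in> E \<Longrightarrow> y = p"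
  shows "p \<in> S"
proof -
  obtain y where y: "y \<in> S" "y \<noteq> l"
    using assms(2,3) by blast
  obtain r where r: "is_path S {e\<in>E. e \<subseteq> S} r" "hd r = l" "last r = y"
    using assms(1,2) y(1) unfolding connected_set_def by blast
  then obtain z rest where "r = l # z # rest"
    using y is_path_nonempty[OF r(1)] by (cases r; cases "tl r") auto
  then have "{l, z} \<in> E" "z \<in> S"
    using r(1) by (auto simp: is_path_Cons_Cons_iff)
  then show "p \<in> S"
    using assms(4) by blast
qed

lemma connected_sets_delete_leaf_meet:
  assumes "connected_set V E S" "connected_set V E S'" "S \<inter> S' \<noteq> {}" "S \<noteq> {l}" "S' \<noteq> {l}"
    "\<And>y. {l, y} \<in> E \<Longrightarrow> y = p" "l \<noteq> p"
  shows "(S - {l}) \<inter> (S' - {l}) \<noteq> {}"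
proof (cases "l \<in> S \<and> l \<in> S'")
  case True
  then have "p \<in> S" "p \<in> S'"
    using connected_set_contains_leaf_neighbour assms(1,2,4,5,6) by metis+
  then show ?thesis
    using assms(7) by blast
qed (use assms(3) in blast)

lemma connected_set_delete_leaf:
  assumes "connected_set V E S" "S \<noteq> {l}" "\<And>y. {l, y} \<in> E \<Longrightarrow> y = p"
  shows "connected_set (V - {l}) {e\<in>E. l \<notin> e} (S - {l})"
  unfolding connected_set_def
proof (intro conjI ballI)
  show "S - {l} \<noteq> {}" "S - {l} \<subseteq> V - {l}"
    using assms(1,2) unfolding connected_set_def by auto
  fix x y assume xy: "x \<in> S - {l}" "y \<in> S - {l}"
  then obtain r where r: "is_path S {e\<in>E. e \<subseteq> S} r" "hd r = x" "last r = y"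
    using assms(1) unfolding connected_set_def by blast
  have "l \<notin> set r"
    using path_avoids_leaf[OF r(1)] r(2,3) xy assms(3) by auto
  then have "is_path (S - {l}) {e\<in>{e\<in>E. l \<notin> e}. e \<subseteq> S - {l}} r"
    using r(1) by (rule_tac is_path_subgraph) (auto simp: is_path_def)
  then show "\<exists>r. is_path (S - {l}) {e\<in>{e\<in>E. l \<notin> e}. e \<subseteq> S - {l}} r \<and> hd r = x \<and> last r = y"
    using r by blast
qed

lemma tree_delete_leaf:
  assumes "tree V E" "p \<in> V" "p \<noteq> l" "\<And>y. {l, y} \<in> E \<Longrightarrow> y = p"
  shows "tree (V - {l}) {e\<in>E. l \<notin> e}"
proof -
  have G: "graph V E" "connected_set V E V" "\<not> has_cycle V E"
    using assms(1) unfolding tree_def connected_graph_def by auto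
  have "graph (V - {l}) {e\<in>E. l \<notin> e}"
    using G(1) unfolding graph_def by fastforce
  moreover have "connected_set (V - {l}) {e\<in>E. l \<notin> e} (V - {l})"
    using connected_set_delete_leaf[OF G(2) _ assms(4)] assms(2,3) by blast
  moreover have "\<not> has_cycle (V - {l}) {e\<in>E. l \<notin> e}"
    using G(3) unfolding has_cycle_def is_path_def by blast
  ultimately show ?thesis
    unfolding tree_def connected_graph_def by blast
qed

text \<open>Induction by deleting a leaf l: if some member is {l}, every member contains l;
  otherwise the members minus l are subtrees of the smaller tree and still pairwise meet.\<close>
lemma tree_helly:
  assumes "tree V E" "\<And>i. i \<in> I \<Longrightarrow> connected_set V E (S i)"
    "\<And>i j. i \<in> I \<Longrightarrow> j \<in> I \<Longrightarrow> S i \<inter> S j \<noteq> {}"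
  shows "\<exists>t\<in>V. \<forall>i\<in>I. t \<in> S i"
  using assms
proof (induction "card V" arbitrary: V E S rule: less_induct)
  case less
  have fin: "finite V" and V_ne: "V \<noteq> {}"
    using less.prems(1) unfolding tree_def connected_graph_def graph_def connected_set_def by auto
  show ?case
  proof (cases "2 \<le> card V")
    case False
    then have "card V = 1"
      using fin V_ne card_gt_0_iff[of V] by linarith
    then obtain t where V: "V = {t}"
      by (rule card_1_singletonE)
    have "t \<in> S i" if "i \<in> I" for i
      using connected_set_nonempty[OF less.prems(2)[OF that]]
        connected_set_subset[OF less.prems(2)[OF that]] V by blast
    then show ?thesis
      using V by blast
  next
    case True
    obtain l p where lp: "l \<in> V" "p \<in> V" "l \<noteq> p" and nb: "\<And>y. {l, y} \<in> E \<Longrightarrow> y = p"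
      using tree_has_leaf[OF less.prems(1) True] by blast
    show ?thesis
    proof (cases "\<exists>i\<in>I. S i = {l}")
      case True
      then obtain i\<^sub>0 where i\<^sub>0: "i\<^sub>0 \<in> I" "S i\<^sub>0 = {l}" ..
      have "l \<in> S i" if "i \<in> I" for i
        using less.prems(3)[OF that i\<^sub>0(1)] i\<^sub>0(2) by auto
      then show ?thesis
        using lp(1) by blast
    next
      case False
      have meet: "(S i - {l}) \<inter> (S j - {l}) \<noteq> {}" if "i \<in> I" "j \<in> I" for i j
        using connected_sets_delete_leaf_meet[OF less.prems(2)[OF that(1)] less.prems(2)[OF that(2)]
            less.prems(3)[OF that] _ _ nb lp(3)] that False by blast
      have "\<exists>t\<in>V - {l}. \<forall>i\<in>I. t \<in> S i - {l}"
      proof (rule less.hyps)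
        show "card (V - {l}) < card V"
          using fin lp(1) True by (simp add: card_Diff1_less)
        show "tree (V - {l}) {e\<in>E. l \<notin> e}"
          using tree_delete_leaf[OF less.prems(1) lp(2) lp(3)[symmetric] nb] .
        show "connected_set (V - {l}) {e\<in>E. l \<notin> e} (S i - {l})" if "i \<in> I" for i
          using that connected_set_delete_leaf[where l = l, OF less.prems(2) _ nb] False by blast
      qed (use meet in blast)
      then show ?thesis
        by blast
    qed
  qed
qed

lemma representation_connected_set_UN:
  assumes rep: "representation VH EH VG EG VF EF Phi" and S: "connected_set VG EG S"
  shows "connected_set VF EF (\<Union>v\<in>S. Phi v)"
proof (rule connected_set_UN[OF S])
  have Phi: "\<And>v. v \<in> VG \<Longrightarrow> connected_set VF EF (Phi v)"
    and meet: "\<And>u v. u \<in> VG \<Longrightarrow> v \<in> VG \<Longrightarrow> u \<noteq> v \<Longrightarrow> {u, v} \<in> EG \<Longrightarrow> Phi u \<inter> Phi v \<noteq> {}"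
    using rep unfolding representation_def by auto
  show "connected_set VF EF (Phi v)" if "v \<in> S" for v
    using Phi connected_set_subset[OF S] that by blast
  show "Phi u \<inter> Phi v \<noteq> {}" if "u \<in> S" "v \<in> S" "{u, v} \<in> EG" for u v
  proof (cases "u = v")
    case True
    then show ?thesis
      using connected_set_nonempty[OF Phi] connected_set_subset[OF S] that(1) by blast
  qed (use meet connected_set_subset[OF S] that in blast)
qed

definition bags_meeting :: "'t set \<Rightarrow> ('t \<Rightarrow> 'f set) \<Rightarrow> 'f set \<Rightarrow> 't set" where
  "bags_meeting VT X S = {t\<in>VT. X t \<inter> S \<noteq> {}}"

lemma tree_decomposition_connected_bags_meeting:
  assumes td: "tree_decomposition VF EF VT ET X" and S: "connected_set VF EF S"
  shows "connected_set VT ET (bags_meeting VT X S)"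
proof -
  have subtree: "\<And>x. x \<in> VF \<Longrightarrow> connected_set VT ET {t\<in>VT. x \<in> X t}"
    and edge_bag: "\<And>e. e \<in> EF \<Longrightarrow> \<exists>t\<in>VT. e \<subseteq> X t"
    using td unfolding tree_decomposition_def by auto
  have "connected_set VT ET (\<Union>x\<in>S. {t\<in>VT. x \<in> X t})"
  proof (rule connected_set_UN[OF S])
    show "connected_set VT ET {t\<in>VT. x \<in> X t}" if "x \<in> S" for x
      using subtree connected_set_subset[OF S] that by blast
    show "{t\<in>VT. x \<in> X t} \<inter> {t\<in>VT. y \<in> X t} \<noteq> {}" if "{x, y} \<in> EF" for x y
      using edge_bag[OF that] by blast
  qed
  moreover have "(\<Union>x\<in>S. {t\<in>VT. x \<in> X t}) = bags_meeting VT X S"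
    unfolding bags_meeting_def by blast
  ultimately show ?thesis
    by simp
qed

lemma representation_bags_meeting_longest_paths:
  assumes rep: "representation VH EH VG EG VF EF Phi" and td: "tree_decomposition VF EF VT ET X"
    and G: "connected_graph VG EG" and P: "longest_path VG EG P" and Q: "longest_path VG EG Q"
  shows "bags_meeting VT X (\<Union>v\<in>set P. Phi v) \<inter> bags_meeting VT X (\<Union>v\<in>set Q. Phi v) \<noteq> {}"
proof -
  obtain v where v: "v \<in> set P" "v \<in> set Q"
    using longest_paths_intersect[OF G P Q] by blast
  then have "v \<in> VG"
    using P unfolding longest_path_def is_path_def by blast
  then have "connected_set VF EF (Phi v)"
    using rep unfolding representation_def by blast
  then obtain x where "x \<in> Phi v" "x \<in> VF"
    using connected_set_nonempty connected_set_subset by blast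
  moreover obtain t where "t \<in> VT" "x \<in> X t"
    using td \<open>x \<in> VF\<close> unfolding tree_decomposition_def by blast
  ultimately show ?thesis
    using v unfolding bags_meeting_def by blast
qed

lemma lp_transversal_UN_Vx:
  assumes "\<And>P. longest_path VG EG P \<Longrightarrow> t \<in> bags_meeting VT X (\<Union>v\<in>set P. Phi v)"
  shows "lp_transversal VG EG (\<Union>x\<in>X t. Vx VG Phi x)"
  unfolding lp_transversal_def
proof (intro conjI allI impI)
  show "(\<Union>x\<in>X t. Vx VG Phi x) \<subseteq> VG"
    unfolding Vx_def by blast
  fix P assume P: "longest_path VG EG P"
  then obtain v x where "v \<in> set P" "x \<in> Phi v" "x \<in> X t"
    using assms unfolding bags_meeting_def by blast
  moreover have "set P \<subseteq> VG"
    using P unfolding longest_path_def is_path_def by blast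
  ultimately show "set P \<inter> (\<Union>x\<in>X t. Vx VG Phi x) \<noteq> {}"
    unfolding Vx_def by blast
qed

theorem lemma4p1:
  fixes VH :: "'h set" and EH :: "'h set set"
    and VG :: "'v set" and EG :: "'v set set"
    and VF :: "'f set" and EF :: "'f set set" and Phi :: "'v \<Rightarrow> 'f set"
    and VT :: "'t set" and ET :: "'t set set" and X :: "'t \<Rightarrow> 'f set"
  assumes "graph VH EH"
    and "connected_graph VG EG"
    and "profile VH EH VG EG VF EF Phi VT ET X"
  shows "\<exists>t\<in>VT. lp_transversal VG EG (\<Union>x\<in>X t. Vx VG Phi x)"
proof -
  have rep: "representation VH EH VG EG VF EF Phi" and td: "tree_decomposition VF EF VT ET X"
    using assms(3) unfolding profile_def nice_representation_def by auto
  let ?bags = "\<lambda>P. bags_meeting VT X (\<Union>v\<in>set P. Phi v)"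
  have "\<exists>t\<in>VT. \<forall>P\<in>Collect (longest_path VG EG). t \<in> ?bags P"
  proof (rule tree_helly)
    show "tree VT ET"
      using td unfolding tree_decomposition_def by blast
    show "connected_set VT ET (?bags P)" if "P \<in> Collect (longest_path VG EG)" for P
      using that tree_decomposition_connected_bags_meeting[OF td] representation_connected_set_UN[OF rep]
        is_path_connected_set unfolding longest_path_def by blast
    show "?bags P \<inter> ?bags Q \<noteq> {}"
      if "P \<in> Collect (longest_path VG EG)" "Q \<in> Collect (longest_path VG EG)" for P Q
      using representation_bags_meeting_longest_paths[OF rep td assms(2)] that by blast
  qed
  then obtain t where "t \<in> VT" and "\<forall>P\<in>Collect (longest_path VG EG). t \<in> ?bags P" ..
  then have "lp_transversal VG EG (\<Union>x\<in>X t. Vx VG Phi x)"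
    by (intro lp_transversal_UN_Vx[where VT = VT]) simp
  with \<open>t \<in> VT\<close> show ?thesis ..
qed

end
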